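(* Consider a finite reward-free MDP with occupancy polytope $\Phi$, let $d_e^\star\in\Phi$ and $\delta>0$, and define $\mathcal K_\delta:=\{\tilde r\in\Delta(S\times A):\mathrm{subopt}(\tilde r,d_e^\star)\ge\delta\}$. Suppose that for every $\bar r\in\mathcal K_\delta$ there exist $r_{\bar r}\in\mathcal R(d_e^\star)$ and a demonstrator pair $(d_{\bar r},\epsilon_{\bar r})$ with $d_{\bar r}\in\Phi$, $\epsilon_{\bar r}\ge0$, such that \[(\bar r-r_{\bar r})^\top(d_e^\star-d_{\bar r})>0,\qquad \mathrm{subopt}(r_{\bar r},d_{\bar r})\in[\epsilon_{\bar r}-\delta,\epsilon_{\bar r}].\] Then there exists a finite subset $\{\bar r_i\}_{i=1}^N\subseteq\mathcal K_\delta$ such that for every $\tilde r\in\mathcal K_\delta$ there is $i\in[N]$ with \[(\tilde r-r_{\bar r_i})^\top(d_e^\star-d_{\bar r_i})>0\quad\text{and}\quad\mathrm{subopt}(r_{\bar r_i},d_{\bar r_i})\in[\epsilon_{\bar r_i}-\delta,\epsilon_{\bar r_i}].\] In particular, this holds for every $\tilde r\in\Delta(S\times A)$ with $\mathrm{subopt}(\tilde r,d_e^\star)>\delta$, i.e. the finite collection $\{(d_{\bar r_i},\epsilon_{\bar r_i})\}_{i=1}^N$ satisfies this pointwise condition.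
   Context: The MDP has finite $S$, $A$, transitions $P$, initial distribution $\mu_0$, discount $\gamma\in(0,1)$; $(Md)(s)=\sum_a d(s,a)-\gamma\sum_{s',a'}P(s\mid s',a')d(s',a')$ and $\Phi=\{d\ge0:Md=(1-\gamma)\mu_0\}$. Rewards are $r\in\Delta(S\times A)$. $\mathrm{subopt}(r,d):=\max_{\tilde d\in\Phi}r^\top\tilde d-r^\top d$; $\mathcal R(d_e^\star):=\{r\in\Delta(S\times A):\mathrm{subopt}(r,d_e^\star)=0\}$. *)

theory Defs
  imports "HOL-Analysis.Analysis"
begin

text \<open>Finite state space 's and action space 'a are finite types.
  P s s' a' is the transition probability P(s | s', a').
  Occupancy measures / rewards are functions on 's \<times> 'a.\<close>

definition dotp :: "('s::finite \<times> 'a::finite \<Rightarrow> real) \<Rightarrow> ('s \<times> 'a \<Rightarrow> real) \<Rightarrow> real" where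
  "dotp r d = (\<Sum>x\<in>UNIV. r x * d x)"

definition flowM :: "real \<Rightarrow> ('s::finite \<Rightarrow> 's \<Rightarrow> 'a::finite \<Rightarrow> real)
     \<Rightarrow> ('s \<times> 'a \<Rightarrow> real) \<Rightarrow> 's \<Rightarrow> real" where
  "flowM \<gamma> P d s = (\<Sum>a\<in>UNIV. d (s, a)) - \<gamma> * (\<Sum>(s', a')\<in>UNIV. P s s' a' * d (s', a'))"

definition occ_polytope :: "real \<Rightarrow> ('s::finite \<Rightarrow> 's \<Rightarrow> 'a::finite \<Rightarrow> real)
     \<Rightarrow> ('s \<Rightarrow> real) \<Rightarrow> ('s \<times> 'a \<Rightarrow> real) set" where
  "occ_polytope \<gamma> P \<mu>0 = {d. (\<forall>x. 0 \<le> d x) \<and> (\<forall>s. flowM \<gamma> P d s = (1 - \<gamma>) * \<mu>0 s)}"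

definition simplexSA :: "('s::finite \<times> 'a::finite \<Rightarrow> real) set" where
  "simplexSA = {r. (\<forall>x. 0 \<le> r x) \<and> (\<Sum>x\<in>UNIV. r x) = 1}"

text \<open>subopt r d = max over occupancy polytope of r^T d' minus r^T d (max written as Sup;
  the polytope is nonempty and compact under the MDP assumptions, so the Sup is attained).\<close>
definition subopt :: "real \<Rightarrow> ('s::finite \<Rightarrow> 's \<Rightarrow> 'a::finite \<Rightarrow> real) \<Rightarrow> ('s \<Rightarrow> real)
     \<Rightarrow> ('s \<times> 'a \<Rightarrow> real) \<Rightarrow> ('s \<times> 'a \<Rightarrow> real) \<Rightarrow> real" where
  "subopt \<gamma> P \<mu>0 r d = Sup ((\<lambda>d'. dotp r d') ` occ_polytope \<gamma> P \<mu>0) - dotp r d"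

definition feasible_rewards :: "real \<Rightarrow> ('s::finite \<Rightarrow> 's \<Rightarrow> 'a::finite \<Rightarrow> real) \<Rightarrow> ('s \<Rightarrow> real)
     \<Rightarrow> ('s \<times> 'a \<Rightarrow> real) \<Rightarrow> ('s \<times> 'a \<Rightarrow> real) set" where
  "feasible_rewards \<gamma> P \<mu>0 de = {r \<in> simplexSA. subopt \<gamma> P \<mu>0 r de = 0}"

definition K_delta :: "real \<Rightarrow> ('s::finite \<Rightarrow> 's \<Rightarrow> 'a::finite \<Rightarrow> real) \<Rightarrow> ('s \<Rightarrow> real)
     \<Rightarrow> ('s \<times> 'a \<Rightarrow> real) \<Rightarrow> real \<Rightarrow> ('s \<times> 'a \<Rightarrow> real) set" where
  "K_delta \<gamma> P \<mu>0 de \<delta> = {r \<in> simplexSA. subopt \<gamma> P \<mu>0 r de \<ge> \<delta>}"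

end

theory Submission
  imports Defs
begin

text \<open>Identify rewards with vectors in \<open>real^('s \<times> 'a)\<close>. Occupancy measures are probability
  distributions, so \<open>r \<mapsto> subopt r d\<^sub>e\<close> is 2-Lipschitz in the sup-norm and \<open>K\<^sub>\<delta>\<close> is a closed
  subset of the simplex, hence compact. The demonstrator chosen for \<open>r\<^sub>b\<close> puts \<open>r\<^sub>b\<close> itself into
  the open half-space \<open>{r. (r - r\<^sub>r\<^sub>b)\<^sup>T (d\<^sub>e - d\<^sub>r\<^sub>b) > 0}\<close>, so these half-spaces cover
  \<open>K\<^sub>\<delta>\<close> and finitely many of them already do.\<close>

lemma occ_polytope_subset_simplexSA:
  fixes P :: "'s::finite \<Rightarrow> 's \<Rightarrow> 'a::finite \<Rightarrow> real"
  assumes "\<gamma> < 1"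
    and P_sum: "\<And>s' a'. (\<Sum>s\<in>UNIV. P s s' a') = 1"
    and mu_sum: "(\<Sum>s\<in>UNIV. \<mu>0 s) = 1"
  shows "occ_polytope \<gamma> P \<mu>0 \<subseteq> simplexSA"
proof
  fix d assume d: "d \<in> occ_polytope \<gamma> P \<mu>0"
  have "(\<Sum>s\<in>UNIV. flowM \<gamma> P d s) =
      (\<Sum>s\<in>UNIV. \<Sum>a\<in>UNIV. d (s, a)) - \<gamma> * (\<Sum>s\<in>UNIV. \<Sum>x\<in>UNIV. P s (fst x) (snd x) * d x)"
    by (simp add: flowM_def sum_subtractf sum_distrib_left case_prod_beta)
  also have "(\<Sum>s\<in>UNIV. \<Sum>a\<in>UNIV. d (s, a)) = (\<Sum>x\<in>UNIV. d x)"
    unfolding sum.cartesian_product UNIV_Times_UNIV by simp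
  also have "(\<Sum>s\<in>UNIV. \<Sum>x\<in>UNIV. P s (fst x) (snd x) * d x) = (\<Sum>x\<in>UNIV. d x)"
    by (subst sum.swap) (simp add: sum_distrib_right[symmetric] P_sum)
  finally have "(\<Sum>s\<in>UNIV. flowM \<gamma> P d s) = (1 - \<gamma>) * (\<Sum>x\<in>UNIV. d x)"
    by (simp add: algebra_simps)
  moreover have "(\<Sum>s\<in>UNIV. flowM \<gamma> P d s) = (1 - \<gamma>) * 1"
    using d mu_sum by (simp add: occ_polytope_def sum_distrib_left[symmetric])
  ultimately show "d \<in> simplexSA"
    using \<open>\<gamma> < 1\<close> d by (simp add: simplexSA_def occ_polytope_def)
qed

lemma dotp_diff_abs_le:
  assumes d: "d \<in> simplexSA" and e: "\<forall>x. \<bar>r x - r' x\<bar> \<le> e"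
  shows "\<bar>dotp r d - dotp r' d\<bar> \<le> e"
proof -
  have nonneg: "\<And>x. 0 \<le> d x" and sum1: "(\<Sum>x\<in>UNIV. d x) = 1"
    using d by (auto simp: simplexSA_def)
  have "\<bar>dotp r d - dotp r' d\<bar> = \<bar>\<Sum>x\<in>UNIV. (r x - r' x) * d x\<bar>"
    by (simp add: dotp_def sum_subtractf[symmetric] algebra_simps)
  also have "\<dots> \<le> (\<Sum>x\<in>UNIV. \<bar>r x - r' x\<bar> * d x)"
    using sum_abs[of "\<lambda>x. (r x - r' x) * d x"] nonneg by (simp add: abs_mult)
  also have "\<dots> \<le> (\<Sum>x\<in>UNIV. e * d x)"
    using e nonneg by (intro sum_mono mult_right_mono) auto
  also have "\<dots> = e"
    using sum1 by (simp add: sum_distrib_left[symmetric])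
  finally show ?thesis .
qed

lemma bdd_above_dotp_image:
  assumes "Phi \<subseteq> simplexSA"
  shows "bdd_above ((\<lambda>d. dotp r d) ` Phi)"
proof (rule bdd_aboveI2)
  fix d assume "d \<in> Phi"
  have "\<bar>dotp r d - dotp (\<lambda>_. 0) d\<bar> \<le> (\<Sum>x\<in>UNIV. \<bar>r x\<bar>)"
    using \<open>d \<in> Phi\<close> assms by (intro dotp_diff_abs_le) (auto intro: member_le_sum)
  then show "dotp r d \<le> (\<Sum>x\<in>UNIV. \<bar>r x\<bar>)"
    by (simp add: dotp_def)
qed

lemma Sup_dotp_le:
  assumes "Phi \<noteq> {}" "Phi \<subseteq> simplexSA" and e: "\<forall>x. \<bar>r x - r' x\<bar> \<le> e"
  shows "Sup ((\<lambda>d. dotp r d) ` Phi) \<le> Sup ((\<lambda>d. dotp r' d) ` Phi) + e"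
proof (rule cSup_least)
  show "(\<lambda>d. dotp r d) ` Phi \<noteq> {}"
    using assms(1) by simp
next
  fix y assume "y \<in> (\<lambda>d. dotp r d) ` Phi"
  then obtain d where d: "d \<in> Phi" and y: "y = dotp r d" by auto
  have "\<bar>dotp r d - dotp r' d\<bar> \<le> e"
    using d assms(2) by (intro dotp_diff_abs_le[OF _ e]) auto
  moreover have "dotp r' d \<le> Sup ((\<lambda>d. dotp r' d) ` Phi)"
    using bdd_above_dotp_image[OF assms(2)] d by (intro cSup_upper) auto
  ultimately show "y \<le> Sup ((\<lambda>d. dotp r' d) ` Phi) + e"
    using y by linarith
qed

lemma subopt_le_subopt_plus:
  assumes "occ_polytope \<gamma> P \<mu>0 \<noteq> {}" "occ_polytope \<gamma> P \<mu>0 \<subseteq> simplexSA"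
    and "d \<in> simplexSA" and e: "\<forall>x. \<bar>r x - r' x\<bar> \<le> e"
  shows "subopt \<gamma> P \<mu>0 r d \<le> subopt \<gamma> P \<mu>0 r' d + 2 * e"
  using Sup_dotp_le[OF assms(1,2) e] dotp_diff_abs_le[OF assms(3) e]
  unfolding subopt_def by linarith

lemma lipschitz_subopt_vec:
  fixes P :: "'s::finite \<Rightarrow> 's \<Rightarrow> 'a::finite \<Rightarrow> real"
  assumes "occ_polytope \<gamma> P \<mu>0 \<noteq> {}" "occ_polytope \<gamma> P \<mu>0 \<subseteq> simplexSA"
    and "d \<in> simplexSA"
  shows "2-lipschitz_on UNIV (\<lambda>v::real^('s \<times> 'a). subopt \<gamma> P \<mu>0 (vec_nth v) d)"
proof -
  have "dist (subopt \<gamma> P \<mu>0 (vec_nth v) d) (subopt \<gamma> P \<mu>0 (vec_nth w) d) \<le> 2 * dist v w"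
    for v w :: "real^('s \<times> 'a)"
  proof -
    have "\<forall>x. \<bar>v$x - w$x\<bar> \<le> dist v w" "\<forall>x. \<bar>w$x - v$x\<bar> \<le> dist v w"
      by (metis component_le_norm_cart dist_norm dist_commute vector_minus_component)+
    from this[THEN subopt_le_subopt_plus[OF assms]] show ?thesis
      by (simp add: dist_real_def abs_le_iff)
  qed
  then show ?thesis
    by (intro lipschitz_onI) auto
qed

lemma compact_vec_simplexSA: "compact {v::real^('s::finite \<times> 'a::finite). vec_nth v \<in> simplexSA}"
  unfolding compact_eq_bounded_closed
proof
  show "bounded {v::real^('s \<times> 'a). vec_nth v \<in> simplexSA}"
    unfolding bounded_iff
  proof (intro exI[of _ 1] ballI)
    fix v :: "real^('s \<times> 'a)"
    assume "v \<in> {v. vec_nth v \<in> simplexSA}"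
    then have "\<And>i. 0 \<le> v$i" "(\<Sum>i\<in>UNIV. v$i) = 1"
      by (auto simp: simplexSA_def)
    then show "norm v \<le> 1"
      using norm_le_l1_cart[of v] by simp
  qed
  have "{v. vec_nth v \<in> simplexSA} =
      (\<Inter>i. {v::real^('s \<times> 'a). 0 \<le> v$i}) \<inter> {v. (\<Sum>i\<in>UNIV. v$i) = 1}"
    by (auto simp: simplexSA_def)
  moreover have "closed ((\<Inter>i. {v::real^('s \<times> 'a). 0 \<le> v$i}) \<inter> {v. (\<Sum>i\<in>UNIV. v$i) = 1})"
    by (intro closed_Int closed_INT ballI closed_Collect_le closed_Collect_eq
        continuous_intros continuous_on_component)
  ultimately show "closed {v::real^('s \<times> 'a). vec_nth v \<in> simplexSA}"
    by simp
qed

lemma compact_vec_K_delta: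
  assumes "occ_polytope \<gamma> P \<mu>0 \<noteq> {}" "occ_polytope \<gamma> P \<mu>0 \<subseteq> simplexSA"
    and "d \<in> simplexSA"
  shows "compact {v. vec_nth v \<in> K_delta \<gamma> P \<mu>0 d \<delta>}"
proof -
  have "{v. vec_nth v \<in> K_delta \<gamma> P \<mu>0 d \<delta>} =
      {v. vec_nth v \<in> simplexSA} \<inter> {v. \<delta> \<le> subopt \<gamma> P \<mu>0 (vec_nth v) d}"
    by (auto simp: K_delta_def)
  moreover have "closed {v. \<delta> \<le> subopt \<gamma> P \<mu>0 (vec_nth v) d}"
    using lipschitz_on_continuous_on[OF lipschitz_subopt_vec[OF assms]]
    by (intro closed_Collect_le continuous_intros)
  ultimately show ?thesis
    by (simp add: compact_Int_closed[OF compact_vec_simplexSA])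
qed

lemma open_vec_dotp_gt: "open {v. 0 < dotp (\<lambda>x. v$x - c x) w}"
  unfolding dotp_def by (intro open_Collect_less continuous_intros continuous_on_component)

lemma finite_subcover_strict_halfspaces:
  fixes K :: "('s::finite \<times> 'a::finite \<Rightarrow> real) set"
  assumes "compact {v. vec_nth v \<in> K}"
    and self: "\<And>r. r \<in> K \<Longrightarrow> 0 < dotp (\<lambda>x. r x - c r x) (w r)"
  shows "\<exists>F. finite F \<and> F \<subseteq> K \<and> (\<forall>r\<in>K. \<exists>rb\<in>F. 0 < dotp (\<lambda>x. r x - c rb x) (w rb))"
proof -
  define H where "H rb = {v. 0 < dotp (\<lambda>x. v$x - c rb x) (w rb)}" for rb
  have "{v. vec_nth v \<in> K} \<subseteq> (\<Union>rb\<in>K. H rb)"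
  proof
    fix v assume "v \<in> {v. vec_nth v \<in> K}"
    then show "v \<in> (\<Union>rb\<in>K. H rb)"
      using self[of "vec_nth v"] by (auto simp: H_def)
  qed
  moreover have "open (H rb)" for rb
    unfolding H_def by (rule open_vec_dotp_gt)
  ultimately obtain F where F: "F \<subseteq> K" "finite F" and cover: "{v. vec_nth v \<in> K} \<subseteq> (\<Union>rb\<in>F. H rb)"
    using compactE_image[OF assms(1)] by metis
  have "\<exists>rb\<in>F. 0 < dotp (\<lambda>x. r x - c rb x) (w rb)" if "r \<in> K" for r
  proof -
    have "vec_lambda r \<in> {v. vec_nth v \<in> K}"
      using that by (simp add: vec_lambda_inverse)
    with cover obtain rb where "rb \<in> F" "vec_lambda r \<in> H rb"
      by blast
    then show ?thesis
      by (auto simp: H_def)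
  qed
  with F show ?thesis
    by blast
qed

theorem mainTheorem9:
  fixes \<gamma> :: real
    and P :: "'s::finite \<Rightarrow> 's \<Rightarrow> 'a::finite \<Rightarrow> real"
    and \<mu>0 :: "'s \<Rightarrow> real"
    and de :: "'s \<times> 'a \<Rightarrow> real"
    and \<delta> :: real
    and rf df :: "('s \<times> 'a \<Rightarrow> real) \<Rightarrow> ('s \<times> 'a \<Rightarrow> real)"
    and ef :: "('s \<times> 'a \<Rightarrow> real) \<Rightarrow> real"
  assumes gamma: "0 < \<gamma>" "\<gamma> < 1"
    and P_nonneg: "\<And>s s' a'. 0 \<le> P s s' a'"
    and P_sum: "\<And>s' a'. (\<Sum>s\<in>UNIV. P s s' a') = 1"
    and mu_nonneg: "\<And>s. 0 \<le> \<mu>0 s"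
    and mu_sum: "(\<Sum>s\<in>UNIV. \<mu>0 s) = 1"
    and de_in: "de \<in> occ_polytope \<gamma> P \<mu>0"
    and delta: "0 < \<delta>"
    and demo: "\<And>rb. rb \<in> K_delta \<gamma> P \<mu>0 de \<delta> \<Longrightarrow>
         rf rb \<in> feasible_rewards \<gamma> P \<mu>0 de \<and> df rb \<in> occ_polytope \<gamma> P \<mu>0 \<and> 0 \<le> ef rb
         \<and> dotp (\<lambda>x. rb x - rf rb x) (\<lambda>x. de x - df rb x) > 0
         \<and> ef rb - \<delta> \<le> subopt \<gamma> P \<mu>0 (rf rb) (df rb)
         \<and> subopt \<gamma> P \<mu>0 (rf rb) (df rb) \<le> ef rb"
  shows "\<exists>F. finite F \<and> F \<subseteq> K_delta \<gamma> P \<mu>0 de \<delta> \<and>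
           (\<forall>rt \<in> K_delta \<gamma> P \<mu>0 de \<delta>. \<exists>rb \<in> F.
              dotp (\<lambda>x. rt x - rf rb x) (\<lambda>x. de x - df rb x) > 0
              \<and> ef rb - \<delta> \<le> subopt \<gamma> P \<mu>0 (rf rb) (df rb)
              \<and> subopt \<gamma> P \<mu>0 (rf rb) (df rb) \<le> ef rb) \<and>
           (\<forall>rt \<in> simplexSA. subopt \<gamma> P \<mu>0 rt de > \<delta> \<longrightarrow> (\<exists>rb \<in> F.
              dotp (\<lambda>x. rt x - rf rb x) (\<lambda>x. de x - df rb x) > 0
              \<and> ef rb - \<delta> \<le> subopt \<gamma> P \<mu>0 (rf rb) (df rb)
              \<and> subopt \<gamma> P \<mu>0 (rf rb) (df rb) \<le> ef rb))"
proof -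
  let ?K = "K_delta \<gamma> P \<mu>0 de \<delta>"
  have "occ_polytope \<gamma> P \<mu>0 \<subseteq> simplexSA"
    using occ_polytope_subset_simplexSA[OF gamma(2) P_sum mu_sum] .
  with de_in have compact: "compact {v. vec_nth v \<in> ?K}"
    by (intro compact_vec_K_delta) auto
  have self: "0 < dotp (\<lambda>x. rb x - rf rb x) (\<lambda>x. de x - df rb x)" if "rb \<in> ?K" for rb
    using demo[OF that] by blast
  obtain F where F: "finite F" "F \<subseteq> ?K"
    and cover: "\<forall>rt\<in>?K. \<exists>rb\<in>F. 0 < dotp (\<lambda>x. rt x - rf rb x) (\<lambda>x. de x - df rb x)"
    using finite_subcover_strict_halfspaces[OF compact self] by blast
  have demonstrator_bounds: "ef rb - \<delta> \<le> subopt \<gamma> P \<mu>0 (rf rb) (df rb)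
      \<and> subopt \<gamma> P \<mu>0 (rf rb) (df rb) \<le> ef rb" if "rb \<in> F" for rb
    using demo[of rb] that F(2) by blast
  have "rt \<in> ?K" if "rt \<in> simplexSA" "subopt \<gamma> P \<mu>0 rt de > \<delta>" for rt
    using that by (simp add: K_delta_def)
  then show ?thesis
    using F cover demonstrator_bounds by (intro exI[of _ F]) blast
qed

end
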